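(* Let $M$ be an enveloping matroid for a delta-matroid $D$ on $[n,\overline{n}]$, and let $S\in\operatorname{AdS}_n$. Then $S$ is independent in $M$ if and only if $S$ is independent in $D$.
   Context: Let $[n,\overline{n}]=\{1,\dots,n,\overline{1},\dots,\overline{n}\}$ with involution $a\mapsto\overline{a}$; $\overline{S}=\{\overline{a}:a\in S\}$. A subset is admissible if it contains at most one of $i,\overline{i}$ for each $i$; $\operatorname{AdS}_n$ is the set of admissible subsets. In $\mathbb{R}^n$ set $e_{\overline{i}}=-e_i$, $e_S=\sum_{a\in S}e_a$. A delta-matroid $D$ on $[n,\overline{n}]$ is a nonempty collection $\mathcal{F}$ of admissible sets of size $n$ (feasible sets) such that $P(D)=\operatorname{Conv}\{e_B:B\in\mathcal{F}\}$ has all edges parallel to some $e_i$ or $e_i\pm e_j$. An admissible $S$ is independent in $D$ if it is contained in a feasible set (equivalently $\max_{B\in\mathcal{F}}(|S\cap B|-|\overline{S}\cap B|)=|S|$). For $S\subseteq[n,\overline{n}]$ let $u_S\in\mathbb{R}^{[n,\overline{n}]}$ be its indicator vector; for a matroid $M$ on the $2n$-element ground set $[n,\overline{n}]$ let $P(M)=\operatorname{Conv}\{u_B:B\text{ a basis of }M\}$. Let $\operatorname{env}\colon\mathbb{R}^{[n,\overline{n}]}\to\mathbb{R}^n$, $(x_1,\dots,x_n,x_{\overline{1}},\dots,x_{\overline{n}})\mapsto(x_1-x_{\overline{1}},\dots,x_n-x_{\overline{n}})$. $M$ is an enveloping matroid for $D$ if $\operatorname{env}(P(M))=P(D)$. 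*)

theory Defs
  imports "HOL-Analysis.Analysis"
begin

text \<open>Ground set [n, nbar] is modelled as the type 'n \<times> bool with n = CARD('n):
  (i, True) stands for i and (i, False) stands for its barred copy.\<close>

definition bar :: "'n \<times> bool \<Rightarrow> 'n \<times> bool" where
  "bar a = (fst a, \<not> snd a)"

definition admissible :: "('n \<times> bool) set \<Rightarrow> bool" where
  "admissible S \<longleftrightarrow> (\<forall>a\<in>S. bar a \<notin> S)"

definition AdS :: "('n::finite \<times> bool) set set" where
  "AdS = {S. admissible S}"

definition evec :: "'n::finite \<times> bool \<Rightarrow> real ^ 'n" where
  "evec a = (if snd a then axis (fst a) 1 else - axis (fst a) 1)"

definition eS :: "('n::finite \<times> bool) set \<Rightarrow> real ^ 'n" where
  "eS S = (\<Sum>a\<in>S. evec a)"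

definition PD :: "('n::finite \<times> bool) set set \<Rightarrow> (real ^ 'n) set" where
  "PD F = convex hull (eS ` F)"

definition edge_dirs :: "(real ^ 'n::finite) set" where
  "edge_dirs = {axis i 1 | i. True}
     \<union> {axis i 1 + axis j 1 | i j. i \<noteq> j} \<union> {axis i 1 - axis j 1 | i j. i \<noteq> j}"

definition parallel_to :: "(real ^ 'n::finite) set \<Rightarrow> real ^ 'n \<Rightarrow> bool" where
  "parallel_to E v \<longleftrightarrow> (\<forall>x\<in>E. \<forall>y\<in>E. \<exists>c. x - y = c *\<^sub>R v)"

definition delta_matroid :: "('n::finite \<times> bool) set set \<Rightarrow> bool" where
  "delta_matroid F \<longleftrightarrow> F \<noteq> {} \<and>
     (\<forall>B\<in>F. admissible B \<and> card B = CARD('n)) \<and>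
     (\<forall>E. E face_of PD F \<and> aff_dim E = 1 \<longrightarrow> (\<exists>v\<in>edge_dirs. parallel_to E v))"

definition indep_D :: "('n::finite \<times> bool) set set \<Rightarrow> ('n \<times> bool) set \<Rightarrow> bool" where
  "indep_D F S \<longleftrightarrow> admissible S \<and> (\<exists>B\<in>F. S \<subseteq> B)"

definition matroid_bases :: "('a::finite) set set \<Rightarrow> bool" where
  "matroid_bases Bs \<longleftrightarrow> Bs \<noteq> {} \<and>
     (\<forall>B1\<in>Bs. \<forall>B2\<in>Bs. \<forall>x\<in>B1 - B2. \<exists>y\<in>B2 - B1. insert y (B1 - {x}) \<in> Bs)"

definition indep_M :: "('a::finite) set set \<Rightarrow> 'a set \<Rightarrow> bool" where
  "indep_M Bs S \<longleftrightarrow> (\<exists>B\<in>Bs. S \<subseteq> B)"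

definition uS :: "('a::finite) set \<Rightarrow> real ^ 'a" where
  "uS S = (\<chi> a. if a \<in> S then 1 else 0)"

definition PM :: "('a::finite) set set \<Rightarrow> (real ^ 'a) set" where
  "PM Bs = convex hull (uS ` Bs)"

definition env :: "real ^ ('n::finite \<times> bool) \<Rightarrow> real ^ 'n" where
  "env x = (\<chi> i. x $ (i, True) - x $ (i, False))"

definition enveloping :: "('n::finite \<times> bool) set set \<Rightarrow> ('n \<times> bool) set set \<Rightarrow> bool" where
  "enveloping Bs F \<longleftrightarrow> env ` PM Bs = PD F"

end

theory Submission imports Defs begin

text \<open>
  Since \<open>env (uS X) = eS X\<close> and \<open>env\<close> is linear, \<open>PD F\<close> is also the convex hull of the points
  \<open>eS B\<close> for the bases \<open>B\<close> of \<open>M\<close>. Maximise the functional \<open>x \<mapsto> eS S \<bullet> x\<close> over this polytope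
  at a vertex \<open>v\<close>; then \<open>v = eS B = eS B'\<close> for a basis \<open>B\<close> and a feasible set \<open>B'\<close>, and
  \<open>B \<subseteq> B'\<close> because all entries of \<open>eS B'\<close> are \<open>\<plusminus>1\<close>. For admissible \<open>S\<close> the value
  \<open>eS S \<bullet> eS X\<close> is at most \<open>card S\<close>, with equality iff \<open>S \<subseteq> X\<close>, so if \<open>S\<close> lies in a feasible
  set it lies in \<open>B\<close>. Conversely, if \<open>S\<close> lies in some basis, basis exchange produces a basis
  containing \<open>S\<close> inside \<open>S \<union> B\<close>, which would score strictly more than \<open>B\<close> unless \<open>S \<subseteq> B\<close>;
  hence \<open>S \<subseteq> B \<subseteq> B'\<close>.
\<close>

lemma eS_component:
  "eS X $ i = (if (i, True) \<in> X then 1 else 0) - (if (i, False) \<in> X then 1 else 0)"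
proof -
  have "eS X $ i = (\<Sum>b\<in>X. evec b $ i)"
    unfolding eS_def by (simp add: sum_component)
  also have "\<dots> = (\<Sum>b\<in>X \<inter> {(i, True), (i, False)}. evec b $ i)"
    by (rule sum.mono_neutral_right) (auto simp: evec_def axis_def)
  also have "\<dots> = (if (i, True) \<in> X then 1 else 0) - (if (i, False) \<in> X then 1 else 0)"
    by (cases "(i, True) \<in> X"; cases "(i, False) \<in> X")
       (auto simp: evec_def axis_def Int_insert_right)
  finally show ?thesis .
qed

definition signed_overlap :: "('n \<times> bool) set \<Rightarrow> ('n \<times> bool) set \<Rightarrow> real" where
  "signed_overlap S X = (\<Sum>a\<in>S. (if a \<in> X then 1 else 0) - (if bar a \<in> X then 1 else 0))"

lemma inner_eS_eS:
  fixes S X :: "('n::finite \<times> bool) set"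
  shows "eS S \<bullet> eS X = signed_overlap S X"
  unfolding signed_overlap_def eS_def[of S] inner_sum_left
proof (rule sum.cong)
  fix a :: "'n \<times> bool"
  show "evec a \<bullet> eS X = (if a \<in> X then 1 else 0) - (if bar a \<in> X then 1 else 0)"
    by (cases a; cases "snd a") (auto simp: evec_def inner_axis' eS_component bar_def)
qed simp

lemma signed_overlap_le_card: "signed_overlap S X \<le> card S"
proof -
  have "signed_overlap S X \<le> (\<Sum>a\<in>S. 1)"
    unfolding signed_overlap_def by (rule sum_mono) auto
  then show ?thesis by simp
qed

lemma signed_overlap_eq_card_imp_subset:
  fixes S :: "('n::finite \<times> bool) set"
  assumes "signed_overlap S X = card S"
  shows "S \<subseteq> X"
proof
  fix a assume "a \<in> S"
  show "a \<in> X"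
  proof (rule ccontr)
    assume "a \<notin> X"
    have "signed_overlap S X < (\<Sum>a\<in>S. 1)"
      unfolding signed_overlap_def
      by (rule sum_strict_mono_ex1) (use \<open>a \<in> S\<close> \<open>a \<notin> X\<close> in auto)
    with assms show False by simp
  qed
qed

lemma signed_overlap_eq_card_if_subset:
  assumes "admissible X" "S \<subseteq> X"
  shows "signed_overlap S X = card S"
proof -
  have "signed_overlap S X = (\<Sum>a\<in>S. 1)"
    unfolding signed_overlap_def
    by (rule sum.cong) (use assms in \<open>auto simp: admissible_def\<close>)
  then show ?thesis by simp
qed

lemma signed_overlap_strict_mono:
  fixes S :: "('n::finite \<times> bool) set"
  assumes "admissible S" "S \<subseteq> Y" "Y \<subseteq> S \<union> X" "\<not> S \<subseteq> X"
  shows "signed_overlap S X < signed_overlap S Y"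
proof -
  obtain a where "a \<in> S" "a \<notin> X" using assms(4) by blast
  have bar_in_X: "bar b \<in> X" if "b \<in> S" "bar b \<in> Y" for b
    using that assms(1,3) unfolding admissible_def by blast
  show ?thesis
    unfolding signed_overlap_def
    by (rule sum_strict_mono_ex1)
       (use assms(2) bar_in_X \<open>a \<in> S\<close> \<open>a \<notin> X\<close> in \<open>auto intro!: bexI[of _ a]\<close>)
qed

lemma admissible_full_contains:
  fixes B :: "('n::finite \<times> bool) set"
  assumes "admissible B" "card B = CARD('n)"
  shows "(i, True) \<in> B \<or> (i, False) \<in> B"
proof -
  have "inj_on fst B"
  proof (rule inj_onI)
    fix x y assume "x \<in> B" "y \<in> B" "fst x = fst y"
    then have "y \<noteq> bar x"
      using assms(1) unfolding admissible_def by blast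
    with \<open>fst x = fst y\<close> show "x = y"
      unfolding bar_def by (cases x; cases y) auto
  qed
  with assms(2) have "fst ` B = UNIV"
    by (simp add: card_image card_subset_eq)
  then obtain b where "(i, b) \<in> B" by force
  then show ?thesis by (cases b) auto
qed

lemma eS_eq_full_admissible_imp_subset:
  fixes B :: "('n::finite \<times> bool) set"
  assumes "admissible B" "card B = CARD('n)" "eS X = eS B"
  shows "X \<subseteq> B"
proof
  fix a assume "a \<in> X"
  obtain i b where a: "a = (i, b)" by (cases a)
  have "eS X $ i = eS B $ i" using assms(3) by simp
  moreover have "(i, True) \<in> B \<or> (i, False) \<in> B"
    using admissible_full_contains[OF assms(1,2)] .
  moreover have "\<not> ((i, True) \<in> B \<and> (i, False) \<in> B)"
    using assms(1) unfolding admissible_def bar_def by force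
  ultimately show "a \<in> B"
    using \<open>a \<in> X\<close> unfolding a by (cases b) (auto simp: eS_component split: if_splits)
qed

lemma linear_env: "linear env"
  by (rule linearI) (simp_all add: vec_eq_iff env_def algebra_simps)

lemma env_uS: "env (uS X) = eS X"
  by (simp add: vec_eq_iff env_def uS_def eS_component)

lemma enveloping_imp_convex_hull_eS:
  assumes "enveloping Bs F"
  shows "convex hull (eS ` Bs) = PD F"
  using assms unfolding enveloping_def PM_def
  by (simp add: convex_hull_linear_image[OF linear_env] image_image env_uS)

lemma matroid_bases_exchange_within_union:
  assumes M: "matroid_bases Bs" and "B0 \<in> Bs" "S \<subseteq> B0" "B \<in> Bs"
  shows "\<exists>B'\<in>Bs. S \<subseteq> B' \<and> B' \<subseteq> S \<union> B"
proof -
  let ?P = "\<lambda>X. X \<in> Bs \<and> S \<subseteq> X"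
  obtain X where X: "?P X"
    and X_min: "\<And>Y. ?P Y \<Longrightarrow> card (X - (S \<union> B)) \<le> card (Y - (S \<union> B))"
    using ex_has_least_nat[of ?P B0 "\<lambda>X. card (X - (S \<union> B))"] assms by blast
  have "X \<subseteq> S \<union> B"
  proof (rule ccontr)
    assume "\<not> X \<subseteq> S \<union> B"
    then obtain x where x: "x \<in> X" "x \<notin> S" "x \<notin> B" by blast
    then obtain y where y: "y \<in> B - X" "insert y (X - {x}) \<in> Bs"
      using M X \<open>B \<in> Bs\<close> unfolding matroid_bases_def by blast
    let ?Y = "insert y (X - {x})"
    have "?P ?Y" using y X x by auto
    have "?Y - (S \<union> B) = (X - (S \<union> B)) - {x}" using y by auto
    also have "card \<dots> < card (X - (S \<union> B))"
      by (rule card_Diff1_less) (use x in auto)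
    finally show False using X_min[OF \<open>?P ?Y\<close>] by simp
  qed
  with X show ?thesis by blast
qed

lemma signed_overlap_maximizer_contains_indep:
  assumes "matroid_bases Bs" "admissible S" "indep_M Bs S" "B \<in> Bs"
    and B_max: "\<And>X. X \<in> Bs \<Longrightarrow> signed_overlap S X \<le> signed_overlap S B"
  shows "S \<subseteq> B"
proof (rule ccontr)
  assume "\<not> S \<subseteq> B"
  obtain B0 where "B0 \<in> Bs" "S \<subseteq> B0" using assms(3) by (auto simp: indep_M_def)
  then obtain B' where "B' \<in> Bs" "S \<subseteq> B'" "B' \<subseteq> S \<union> B"
    using matroid_bases_exchange_within_union[OF assms(1)] \<open>B \<in> Bs\<close> by blast
  with assms(2) \<open>\<not> S \<subseteq> B\<close> have "signed_overlap S B < signed_overlap S B'"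
    by (intro signed_overlap_strict_mono)
  with B_max[OF \<open>B' \<in> Bs\<close>] show False by simp
qed

lemma extreme_point_maximizing_inner:
  fixes K :: "'a::euclidean_space set"
  assumes "compact K" "convex K" "K \<noteq> {}"
  obtains v where "v extreme_point_of K" "\<And>x. x \<in> K \<Longrightarrow> c \<bullet> x \<le> c \<bullet> v"
proof -
  have "compact ((\<bullet>) c ` K)"
    using assms(1) by (intro compact_continuous_image continuous_intros)
  then obtain u where "u \<in> K" and u_max: "\<And>x. x \<in> K \<Longrightarrow> c \<bullet> x \<le> c \<bullet> u"
    using compact_attains_sup[of "(\<bullet>) c ` K"] assms(3) by auto
  define G where "G = K \<inter> {x. c \<bullet> x = c \<bullet> u}"
  have face: "G face_of K"
    unfolding G_def by (rule face_of_Int_supporting_hyperplane_le[OF assms(2) u_max])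
  moreover have "compact G" "convex G"
    using face_of_imp_compact[OF assms(2,1) face] face_of_imp_convex[OF face] by auto
  moreover have "G \<noteq> {}" using \<open>u \<in> K\<close> by (auto simp: G_def)
  ultimately obtain v where "v extreme_point_of G"
    using extreme_point_exists_convex by blast
  with face have "v extreme_point_of K" "c \<bullet> v = c \<bullet> u"
    using extreme_point_of_face by (auto simp: G_def)
  with u_max that show ?thesis by simp
qed

lemma enveloping_obtains_maximizing_basis:
  fixes S :: "('n::finite \<times> bool) set"
  assumes F: "delta_matroid F" and "enveloping Bs F"
  obtains B B' where "B \<in> Bs" "B' \<in> F" "B \<subseteq> B'"
    and "\<And>X. X \<in> Bs \<union> F \<Longrightarrow> signed_overlap S X \<le> signed_overlap S B"
proof -
  have PD_Bs: "PD F = convex hull (eS ` Bs)"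
    using enveloping_imp_convex_hull_eS[OF assms(2)] by simp
  have "compact (PD F)" "convex (PD F)" "PD F \<noteq> {}"
    using F by (auto simp: PD_def delta_matroid_def compact_convex_hull finite_imp_compact)
  then obtain v where v: "v extreme_point_of PD F"
    and v_max: "\<And>x. x \<in> PD F \<Longrightarrow> eS S \<bullet> x \<le> eS S \<bullet> v"
    using extreme_point_maximizing_inner[of "PD F" "eS S"] by blast
  obtain B where B: "B \<in> Bs" "v = eS B"
    using v extreme_point_of_convex_hull unfolding PD_Bs by blast
  obtain B' where B': "B' \<in> F" "v = eS B'"
    using v extreme_point_of_convex_hull unfolding PD_def by blast
  have "B \<subseteq> B'"
    using F B B' eS_eq_full_admissible_imp_subset[of B' B] by (simp add: delta_matroid_def)
  moreover have "signed_overlap S X \<le> signed_overlap S B" if "X \<in> Bs \<union> F" for X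
  proof -
    have "eS X \<in> PD F"
      using that by (metis PD_Bs PD_def UnE hull_inc image_eqI)
    then show ?thesis using v_max[of "eS X"] B(2) by (simp add: inner_eS_eS)
  qed
  ultimately show ?thesis using that B(1) B'(1) by blast
qed

theorem proposition3p12:
  fixes F :: "('n::finite \<times> bool) set set" and Bs :: "('n \<times> bool) set set"
    and S :: "('n \<times> bool) set"
  assumes "delta_matroid F"
    and "matroid_bases Bs"
    and "enveloping Bs F"
    and "S \<in> AdS"
  shows "indep_M Bs S \<longleftrightarrow> indep_D F S"
proof -
  have adm_S: "admissible S" using assms(4) by (simp add: AdS_def)
  obtain B B' where B: "B \<in> Bs" "B' \<in> F" "B \<subseteq> B'"
    and B_max: "\<And>X. X \<in> Bs \<union> F \<Longrightarrow> signed_overlap S X \<le> signed_overlap S B"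
    using enveloping_obtains_maximizing_basis[OF assms(1,3)] by blast
  show ?thesis
  proof
    assume "indep_M Bs S"
    then have "S \<subseteq> B"
      using signed_overlap_maximizer_contains_indep[OF assms(2) adm_S _ B(1)] B_max by blast
    with B adm_S show "indep_D F S" by (auto simp: indep_D_def)
  next
    assume "indep_D F S"
    then obtain B0 where "B0 \<in> F" "S \<subseteq> B0" by (auto simp: indep_D_def)
    with assms(1) have "card S = signed_overlap S B0"
      by (simp add: signed_overlap_eq_card_if_subset delta_matroid_def)
    also have "\<dots> \<le> signed_overlap S B" using B_max \<open>B0 \<in> F\<close> by blast
    finally have "S \<subseteq> B"
      using signed_overlap_le_card[of S B] by (intro signed_overlap_eq_card_imp_subset) simp
    with B(1) show "indep_M Bs S" by (auto simp: indep_M_def)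
  qed
qed

end
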